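(* Let $t\ge1$ be an integer. The affine transformation $(x,y)\mapsto(x+H_t,\ y+x+H_t/2)$ maps the lattice $\Lambda_t=(\tfrac t2+\mathbb Z)\times\mathbb Z$ onto itself, maps the grid parabola $P_t$ onto itself, and maps the reference parabola $\Pi_t\colon y=x^2/(2H_t)$, as well as every vertical translate of $\Pi_t$, onto itself.
   Context: Fix an integer $t\ge1$. Let $S_t$ be the set of rational numbers $s$ which, written in lowest terms as $s=a/b$ with $a\in\mathbb Z$ and $b$ a positive integer, satisfy $b\le t$. For $s=a/b\in S_t$ let $v_s=\lfloor t/b\rfloor\,(b,a)$, and $V_t=\{v_s:s\in S_t\}$. The grid parabola $P_t$ is the infinite convex polygonal chain obtained by concatenating the vectors of $V_t$ in order of increasing slope, positioned so that the edge given by $(t,0)$ goes from $(-t/2,0)$ to $(t/2,0)$. $H_t=\sum_{1\le y\le x\le t,\ \gcd(x,y)=1}\lfloor t/x\rfloor\,x$. *)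

theory Defs
  imports "HOL-Analysis.Analysis"
begin

definition S :: "nat \<Rightarrow> rat set" where
  "S t = {s. snd (quotient_of s) \<le> int t}"

definition vvec :: "nat \<Rightarrow> rat \<Rightarrow> real \<times> real" where
  "vvec t s = (let (a, b) = quotient_of s; m = int t div b
               in (of_int (m * b), of_int (m * a)))"

text \<open>Right endpoint of the edge of slope s in the grid parabola: the chain is
  obtained by concatenating the edge vectors in order of increasing slope, with the
  edge of slope 0 (the vector (t,0)) going from (-t/2,0) to (t/2,0).\<close>
definition vertex :: "nat \<Rightarrow> rat \<Rightarrow> real \<times> real" where
  "vertex t s =
     (if 0 \<le> s then (- real t / 2, 0) + (\<Sum>s'\<in>{s'\<in>S t. 0 \<le> s' \<and> s' \<le> s}. vvec t s')
      else (- real t / 2, 0) - (\<Sum>s'\<in>{s'\<in>S t. s < s' \<and> s' < 0}. vvec t s'))"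

definition grid_parabola :: "nat \<Rightarrow> (real \<times> real) set" where
  "grid_parabola t = (\<Union>s\<in>S t. closed_segment (vertex t s - vvec t s) (vertex t s))"

definition H :: "nat \<Rightarrow> nat" where
  "H t = (\<Sum>(x, y)\<in>{(x, y). 1 \<le> y \<and> y \<le> x \<and> x \<le> t \<and> coprime x y}. (t div x) * x)"

definition lattice :: "nat \<Rightarrow> (real \<times> real) set" where
  "lattice t = {(x, y). x - real t / 2 \<in> \<int> \<and> y \<in> \<int>}"

definition Tmap :: "nat \<Rightarrow> real \<times> real \<Rightarrow> real \<times> real" where
  "Tmap t = (\<lambda>(x, y). (x + real (H t), y + x + real (H t) / 2))"

definition ref_parabola :: "nat \<Rightarrow> real \<Rightarrow> (real \<times> real) set" where
  "ref_parabola t c = {(x, y). y = x ^ 2 / (2 * real (H t)) + c}"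

end

theory Submission
  imports Defs "HOL-Number_Theory.Totient"
begin

(* The vertex of P_t ending the edge of slope s is (t/2, 0) plus the oriented sum of the edge
   vectors with slopes in (0, s].  Since s \<mapsto> s + 1 permutes S_t and turns v_s into its image under
   the shear (x, y) \<mapsto> (x, y + x), splitting (0, s + 1] at 1 gives
   vertex (s + 1) = (t/2, 0) + (sum over (0, 1]) + shear (vertex s - (t/2, 0)).
   The slopes in (0, 1] are the fractions y/x with y a totative of x \<le> t, and pairing y with x - y
   shows that the totatives of x add up to x \<phi>(x)/2 (plus 1/2 for x = 1); so the window (0, 1]
   contributes (H_t, (H_t + t)/2), and vertex (s + 1) is the image of vertex s under the map.
   Hence the map permutes the edges of P_t.  The parity H_t \<equiv> t (mod 2) obtained on the way makes it
   preserve the lattice, and completing the square shows that it preserves every translate of \<Pi>_t. *)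

definition interval_sum :: "'a::linorder set \<Rightarrow> ('a \<Rightarrow> 'b::ab_group_add) \<Rightarrow> 'a \<Rightarrow> 'a \<Rightarrow> 'b" where
  "interval_sum A f a b = (if a \<le> b then sum f (A \<inter> {a<..b}) else - sum f (A \<inter> {b<..a}))"

lemma interval_sum_swap: "interval_sum A f a b = - interval_sum A f b a"
  by (cases a b rule: linorder_cases) (auto simp: interval_sum_def)

lemma interval_sum_split:
  assumes fin: "\<And>a b. finite (A \<inter> {a<..b})" and "a \<le> b" "b \<le> c"
  shows "interval_sum A f a c = interval_sum A f a b + interval_sum A f b c"
proof -
  have "sum f (A \<inter> {a<..c}) = sum f (A \<inter> {a<..b} \<union> A \<inter> {b<..c})"
    using assms(2,3) by (intro arg_cong[where f = "sum f"]) auto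
  also have "\<dots> = sum f (A \<inter> {a<..b}) + sum f (A \<inter> {b<..c})"
    by (rule sum.union_disjoint) (use fin in auto)
  finally show ?thesis
    using assms(2,3) order_trans[OF assms(2,3)] by (simp add: interval_sum_def)
qed

lemma interval_sum_add:
  assumes "\<And>a b. finite (A \<inter> {a<..b})"
  shows "interval_sum A f a b + interval_sum A f b c = interval_sum A f a c"
proof -
  note split = interval_sum_split[of A, OF assms]
  note swap = interval_sum_swap[of A f]
  consider "a \<le> b" "b \<le> c" | "a \<le> c" "c \<le> b" | "b \<le> a" "a \<le> c"
    | "b \<le> c" "c \<le> a" | "c \<le> a" "a \<le> b" | "c \<le> b" "b \<le> a"
    by (meson linear)
  then show ?thesis
  proof cases
    case 1 then show ?thesis by (simp add: split[of a b c])
  next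
    case 2 then show ?thesis by (simp add: split[of a c b] swap[of c b])
  next
    case 3 then show ?thesis by (simp add: split[of b a c] swap[of b a])
  next
    case 4 then show ?thesis by (simp add: split[of b c a] swap[of a b] swap[of a c])
  next
    case 5 then show ?thesis by (simp add: split[of c a b] swap[of b c] swap[of a c])
  next
    case 6 then show ?thesis by (simp add: split[of c b a] swap[of a b] swap[of b c] swap[of a c])
  qed
qed

lemma interval_sum_translate:
  fixes d :: "'a::linordered_ab_group_add" and L :: "'b::real_vector \<Rightarrow> 'b"
  assumes A: "(+) d ` A = A" and f: "\<And>x. f (d + x) = L (f x)" and L: "linear L"
  shows "interval_sum A f (d + a) (d + b) = L (interval_sum A f a b)"
proof -
  have "sum f (A \<inter> {d + u<..d + v}) = L (sum f (A \<inter> {u<..v}))" for u v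
  proof -
    have "(+) d ` {u<..v} = {d + u<..d + v}"
      by (auto intro!: image_eqI[where x = "x - d" for x] simp: algebra_simps)
    then have "A \<inter> {d + u<..d + v} = (+) d ` (A \<inter> {u<..v})"
      by (simp add: image_Int A)
    then show ?thesis
      by (simp add: sum.reindex f linear_sum[OF L])
  qed
  then show ?thesis
    by (simp add: interval_sum_def linear_neg[OF L])
qed

lemma sum_totatives: "2 * \<Sum>(totatives n) = n * totient n + of_bool (n = 1)"
proof (cases "n \<ge> 2")
  case True
  have reflect: "n - k \<in> totatives n" if "k \<in> totatives n" for k
  proof -
    have "0 < k" "k < n" "coprime k n"
      using that True totatives_less[of k n] by (auto simp: in_totatives_iff)
    then show ?thesis
      by (simp add: in_totatives_iff coprime_iff_gcd_eq_1 gcd_diff2_nat)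
  qed
  have "\<Sum>(totatives n) = (\<Sum>k\<in>totatives n. n - k)"
    by (rule sum.reindex_bij_witness[where i = "\<lambda>k. n - k" and j = "\<lambda>k. n - k"])
      (auto simp: reflect dest: totatives_le)
  then have "2 * \<Sum>(totatives n) = (\<Sum>k\<in>totatives n. k + (n - k))"
    by (simp add: sum.distrib)
  also have "\<dots> = n * totient n"
    by (simp add: totatives_le totient_def)
  finally show ?thesis
    using True by simp
next
  case False
  then have "n = 0 \<or> n = 1" by auto
  then show ?thesis by auto
qed

lemma H_index_set_eq:
  "{(x, y). 1 \<le> y \<and> y \<le> x \<and> x \<le> t \<and> coprime x y} = (SIGMA x:{1..t}. totatives x)"
  by (auto simp: in_totatives_iff coprime_commute)

lemma H_eq_sum_totient: "H t = (\<Sum>x=1..t. t div x * x * totient x)"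
  unfolding H_def H_index_set_eq by (simp add: sum.Sigma[symmetric] totient_def mult.commute)

lemma le_H: "t \<le> H t"
proof (cases "t = 0")
  case False
  then have "t div 1 * 1 * totient 1 \<le> (\<Sum>x=1..t. t div x * x * totient x)"
    by (intro member_le_sum) auto
  then show ?thesis by (simp add: H_eq_sum_totient)
qed simp

lemma twice_weighted_totative_sum: "2 * (\<Sum>(x, y)\<in>(SIGMA x:{1..t}. totatives x). t div x * y) = H t + t"
proof -
  have "2 * (\<Sum>(x, y)\<in>(SIGMA x:{1..t}. totatives x). t div x * y)
      = (\<Sum>x=1..t. t div x * (2 * \<Sum>(totatives x)))"
    by (simp add: sum.Sigma[symmetric] sum_distrib_left mult.left_commute)
  also have "\<dots> = (\<Sum>x=1..t. t div x * x * totient x) + (\<Sum>x=1..t. t div x * of_bool (x = 1))"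
    by (simp add: sum_totatives algebra_simps sum.distrib)
  also have "(\<Sum>x=1..t. t div x * of_bool (x = 1)) = (\<Sum>x=1..t. if x = 1 then t else 0)"
    by (rule sum.cong) auto
  also have "\<dots> = t"
    by (simp add: sum.delta)
  finally show ?thesis
    by (simp add: H_eq_sum_totient)
qed

lemma quotient_of_coprime_div:
  assumes "coprime a b" "0 < b"
  shows "quotient_of (of_int a / of_int b) = (a, b)"
proof -
  have "quotient_of (Fract a b) = (a, b)"
    using assms by (simp add: quotient_of_Fract)
  then show ?thesis
    by (simp add: Fract_of_int_quotient)
qed

lemma quotient_of_int_add:
  "quotient_of (of_int k + r) = (k * snd (quotient_of r) + fst (quotient_of r), snd (quotient_of r))"
proof -
  obtain n d where q: "quotient_of r = (n, d)"
    by fastforce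
  have "0 < d" "coprime n d"
    using q quotient_of_denom_pos quotient_of_coprime by auto
  have "of_int k + r = of_int (k * d + n) / of_int d"
    using quotient_of_div[OF q] \<open>0 < d\<close> by (simp add: field_simps)
  moreover have "coprime (k * d + n) d"
    using \<open>coprime n d\<close> gcd_add_mult[of d k n] by (simp add: coprime_iff_gcd_eq_1 gcd.commute)
  ultimately have "quotient_of (of_int k + r) = (k * d + n, d)"
    using \<open>0 < d\<close> by (metis quotient_of_coprime_div)
  then show ?thesis
    using q by simp
qed

lemma quotient_of_totative:
  assumes "y \<in> totatives x"
  shows "quotient_of (of_nat y / of_nat x) = (int y, int x)"
  using assms quotient_of_coprime_div[of "int y" "int x"] by (simp add: in_totatives_iff)

lemma int_add_in_S_iff: "of_int k + r \<in> S t \<longleftrightarrow> r \<in> S t"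
  by (simp add: S_def quotient_of_int_add)

lemma S_translate: "(+) (of_int k) ` S t = S t"
proof (intro set_eqI iffI)
  fix r assume "r \<in> S t"
  then have "r - of_int k \<in> S t"
    using int_add_in_S_iff[of k "r - of_int k"] by simp
  then show "r \<in> (+) (of_int k) ` S t"
    by (rule rev_image_eqI) simp
qed (auto simp: int_add_in_S_iff)

lemma finite_S_Ioc: "finite (S t \<inter> {a<..b})"
proof -
  let ?frac = "\<lambda>(d, n). of_int n / of_int d :: rat"
  have "S t \<inter> {a<..b} \<subseteq> ?frac ` (SIGMA d:{1..int t}. {\<lfloor>a * of_int d\<rfloor>..\<lfloor>b * of_int d\<rfloor>})"
  proof
    fix r assume r: "r \<in> S t \<inter> {a<..b}"
    obtain n d where q: "quotient_of r = (n, d)"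
      by fastforce
    have d: "0 < d" "d \<le> int t"
      using r q quotient_of_denom_pos by (auto simp: S_def)
    have r_eq: "r = of_int n / of_int d"
      using quotient_of_div[OF q] .
    then have "of_int n = r * of_int d"
      using d by simp
    then have "a * of_int d < of_int n" "of_int n \<le> b * of_int d"
      using r d by (auto intro: mult_strict_right_mono mult_right_mono)
    then have "n \<in> {\<lfloor>a * of_int d\<rfloor>..\<lfloor>b * of_int d\<rfloor>}"
      by (auto simp: le_floor_iff floor_le_iff)
    then show "r \<in> ?frac ` (SIGMA d:{1..int t}. {\<lfloor>a * of_int d\<rfloor>..\<lfloor>b * of_int d\<rfloor>})"
      using d r_eq by (auto intro!: image_eqI[where x = "(d, n)"])
  qed
  then show ?thesis
    by (rule finite_subset) auto
qed

definition shear :: "real \<times> real \<Rightarrow> real \<times> real" where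
  "shear = (\<lambda>(x, y). (x, y + x))"

lemma linear_shear: "linear shear"
  unfolding shear_def by (rule linearI) (auto simp: algebra_simps)

lemma Tmap_eq_shear: "Tmap t p = (real (H t), real (H t) / 2) + shear p"
  by (simp add: Tmap_def shear_def case_prod_beta)

lemma Tmap_diff: "Tmap t (p - v) = Tmap t p - shear v"
  by (simp add: Tmap_eq_shear linear_diff[OF linear_shear])

lemma Tmap_closed_segment: "Tmap t ` closed_segment a b = closed_segment (Tmap t a) (Tmap t b)"
  by (simp add: Tmap_eq_shear closed_segment_translation closed_segment_linear_image[OF linear_shear]
      image_image)

lemma surj_Tmap: "surj (Tmap t)"
proof (rule surjI[where f = "\<lambda>(x, y). (x - real (H t), y - x + real (H t) / 2)"])
  show "Tmap t ((\<lambda>(x, y). (x - real (H t), y - x + real (H t) / 2)) p) = p" for p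
    by (cases p) (simp add: Tmap_def)
qed

lemma vvec_one_add: "vvec t (1 + r) = shear (vvec t r)"
  using quotient_of_int_add[of 1 r]
  by (simp add: vvec_def shear_def Let_def case_prod_beta algebra_simps)

lemma vvec_totative:
  assumes "y \<in> totatives x"
  shows "vvec t (of_nat y / of_nat x) = (real (t div x * x), real (t div x * y))"
  using quotient_of_totative[OF assms] by (simp add: vvec_def zdiv_int[symmetric])

lemma bij_betw_totatives_S_Ioc:
  "bij_betw (\<lambda>(x, y). of_nat y / of_nat x) (SIGMA x:{1..t}. totatives x) (S t \<inter> {0<..1})"
proof (rule bij_betw_imageI)
  show "inj_on (\<lambda>(x, y). of_nat y / of_nat x :: rat) (SIGMA x:{1..t}. totatives x)"
    by (rule inj_onI) (auto dest!: arg_cong[where f = quotient_of] simp: quotient_of_totative)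
  show "(\<lambda>(x, y). of_nat y / of_nat x) ` (SIGMA x:{1..t}. totatives x) = S t \<inter> {0<..1}"
  proof (intro set_eqI iffI)
    fix r :: rat assume "r \<in> (\<lambda>(x, y). of_nat y / of_nat x) ` (SIGMA x:{1..t}. totatives x)"
    then obtain x y where "x \<in> {1..t}" "y \<in> totatives x" "r = of_nat y / of_nat x"
      by auto
    then show "r \<in> S t \<inter> {0<..1}"
      by (auto simp: S_def quotient_of_totative in_totatives_iff)
  next
    fix r assume r: "r \<in> S t \<inter> {0<..1}"
    obtain n d where q: "quotient_of r = (n, d)"
      by fastforce
    have "0 < d" "d \<le> int t" "coprime n d" and r_eq: "r = of_int n / of_int d"
      using r q quotient_of_denom_pos quotient_of_coprime quotient_of_div by (auto simp: S_def)
    with r have "0 < n" "n \<le> d"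
      by (auto simp: zero_less_divide_iff divide_le_eq_1)
    then have "nat n \<in> totatives (nat d)" "nat d \<in> {1..t}"
      using \<open>0 < d\<close> \<open>d \<le> int t\<close> \<open>coprime n d\<close> by (auto simp: in_totatives_iff coprime_int_iff[symmetric])
    moreover have "r = of_nat (nat n) / of_nat (nat d)"
      using r_eq \<open>0 < n\<close> \<open>0 < d\<close> by simp
    ultimately show "r \<in> (\<lambda>(x, y). of_nat y / of_nat x) ` (SIGMA x:{1..t}. totatives x)"
      by (auto intro!: image_eqI[where x = "(nat d, nat n)"])
  qed
qed

lemma vertex_eq_interval_sum:
  assumes "1 \<le> t"
  shows "vertex t s = (real t / 2, 0) + interval_sum (S t) (vvec t) 0 s"
proof -
  have zero: "0 \<in> S t"
    using assms by (simp add: S_def)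
  have v0: "vvec t 0 = (real t, 0)"
    by (simp add: vvec_def)
  show ?thesis
  proof (cases "0 \<le> s")
    case True
    have "{s'\<in>S t. 0 \<le> s' \<and> s' \<le> s} = insert 0 (S t \<inter> {0<..s})"
      using True zero by auto
    then have "(\<Sum>s'\<in>{s'\<in>S t. 0 \<le> s' \<and> s' \<le> s}. vvec t s') = vvec t 0 + sum (vvec t) (S t \<inter> {0<..s})"
      by (simp add: finite_S_Ioc)
    then show ?thesis
      using True by (simp add: vertex_def interval_sum_def v0)
  next
    case False
    have "S t \<inter> {s<..0} = insert 0 {s'\<in>S t. s < s' \<and> s' < 0}"
      using False zero by auto
    moreover have "finite {s'\<in>S t. s < s' \<and> s' < 0}"
      by (rule finite_subset[OF _ finite_S_Ioc[of t s 0]]) auto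
    ultimately have "sum (vvec t) (S t \<inter> {s<..0}) = vvec t 0 + (\<Sum>s'\<in>{s'\<in>S t. s < s' \<and> s' < 0}. vvec t s')"
      by simp
    then show ?thesis
      using False by (simp add: vertex_def interval_sum_def v0)
  qed
qed

lemma interval_sum_0_1: "interval_sum (S t) (vvec t) 0 1 = (real (H t), (real (H t) + real t) / 2)"
proof -
  let ?P = "SIGMA x:{1..t}. totatives x"
  have "interval_sum (S t) (vvec t) 0 1 = (\<Sum>(x, y)\<in>?P. vvec t (of_nat y / of_nat x))"
    using sum.reindex_bij_betw[OF bij_betw_totatives_S_Ioc, of "vvec t"]
    by (simp add: interval_sum_def case_prod_beta)
  also have "\<dots> = (\<Sum>(x, y)\<in>?P. (real (t div x * x), real (t div x * y)))"
    by (rule sum.cong) (auto simp: vvec_totative)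
  also have "\<dots> = (real (\<Sum>(x, y)\<in>?P. t div x * x), real (\<Sum>(x, y)\<in>?P. t div x * y))"
    by (simp add: prod_eq_iff fst_sum snd_sum case_prod_beta)
  also have "\<dots> = (real (H t), (real (H t) + real t) / 2)"
  proof -
    have "real (\<Sum>(x, y)\<in>?P. t div x * y) = (real (H t) + real t) / 2"
      using arg_cong[OF twice_weighted_totative_sum[of t], of real] by simp
    moreover have "(\<Sum>(x, y)\<in>?P. t div x * x) = H t"
      unfolding H_def H_index_set_eq ..
    ultimately show ?thesis
      by simp
  qed
  finally show ?thesis .
qed

lemma vertex_one_add:
  assumes "1 \<le> t"
  shows "vertex t (1 + s) = Tmap t (vertex t s)"
proof -
  have translate: "(+) 1 ` S t = S t"
    using S_translate[of 1 t] by simp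
  have "interval_sum (S t) (vvec t) 0 (1 + s)
      = interval_sum (S t) (vvec t) 0 1 + interval_sum (S t) (vvec t) (1 + 0) (1 + s)"
    using interval_sum_add[OF finite_S_Ioc, of t "vvec t" 0 1 "1 + s"] by simp
  also have "\<dots> = (real (H t), (real (H t) + real t) / 2) + shear (interval_sum (S t) (vvec t) 0 s)"
    by (simp only: interval_sum_0_1 interval_sum_translate[where f = "vvec t", OF translate vvec_one_add linear_shear])
  finally show ?thesis
    by (simp add: vertex_eq_interval_sum[OF assms] Tmap_eq_shear shear_def case_prod_beta field_simps)
qed

lemma Tmap_grid_parabola:
  assumes "1 \<le> t"
  shows "Tmap t ` grid_parabola t = grid_parabola t"
proof -
  let ?edge = "\<lambda>s. closed_segment (vertex t s - vvec t s) (vertex t s)"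
  have "Tmap t ` grid_parabola t = (\<Union>s\<in>S t. ?edge (1 + s))"
    by (simp add: grid_parabola_def image_UN Tmap_closed_segment Tmap_diff vertex_one_add[OF assms]
        vvec_one_add)
  also have "\<dots> = (\<Union>s\<in>(+) 1 ` S t. ?edge s)"
    by simp
  also have "\<dots> = grid_parabola t"
    using S_translate[of 1 t] by (simp add: grid_parabola_def)
  finally show ?thesis .
qed

lemma Tmap_vimage_lattice: "Tmap t -` lattice t = lattice t"
proof -
  obtain m where m: "H t + t = 2 * m"
    using twice_weighted_totative_sum[of t] by metis
  have "Tmap t (x, y) \<in> lattice t \<longleftrightarrow> (x, y) \<in> lattice t" for x y
  proof -
    have eqs: "x + real (H t) - real t / 2 = (x - real t / 2) + real (H t)"
      "y + x + real (H t) / 2 = y + (x - real t / 2) + real m"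
      using arg_cong[OF m, of real] by (simp_all add: field_simps)
    have "x + real (H t) - real t / 2 \<in> \<int> \<longleftrightarrow> x - real t / 2 \<in> \<int>"
      "y + x + real (H t) / 2 \<in> \<int> \<longleftrightarrow> y + (x - real t / 2) \<in> \<int>"
      unfolding eqs by simp_all
    then show ?thesis
      by (auto simp: lattice_def Tmap_def)
  qed
  then show ?thesis
    by (auto simp: set_eq_iff)
qed

lemma Tmap_vimage_ref_parabola:
  assumes "1 \<le> t"
  shows "Tmap t -` ref_parabola t c = ref_parabola t c"
proof -
  have "real (H t) \<noteq> 0"
    using le_H[of t] assms by simp
  then have "(x + real (H t))\<^sup>2 / (2 * real (H t)) = x\<^sup>2 / (2 * real (H t)) + x + real (H t) / 2" for x
    by (simp add: power2_eq_square field_simps)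
  then have "Tmap t (x, y) \<in> ref_parabola t c \<longleftrightarrow> (x, y) \<in> ref_parabola t c" for x y
    by (auto simp: ref_parabola_def Tmap_def)
  then show ?thesis
    by (auto simp: set_eq_iff)
qed

theorem lemma1:
  fixes t :: nat
  assumes "t \<ge> 1"
  shows "Tmap t ` lattice t = lattice t
       \<and> Tmap t ` grid_parabola t = grid_parabola t
       \<and> (\<forall>c::real. Tmap t ` ref_parabola t c = ref_parabola t c)"
  using surj_image_vimage_eq[OF surj_Tmap] Tmap_vimage_lattice Tmap_grid_parabola[OF assms]
    Tmap_vimage_ref_parabola[OF assms] by metis

end
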